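(* With $X_i=Z_i(\alpha,v,w)$, $Y_i=Z_i(\beta,v,w')$ and the composition $X_i\odot Y_i$ defined recursively by \[X_i \odot Y_i = \begin{pmatrix} a_i & X_{i-1}\odot Y_{i-1} \\ -\overline{X_{i-1}\odot Y_{i-1}} & b_i q_{Y_i} +b'_iq_{X_i} -a_ib_ib'_i\end{pmatrix},\qquad X_1\odot Y_1=\begin{pmatrix} a_1 & \alpha\beta\\ -\overline{\alpha\beta} & b_1q_{Y_1}+b_1'q_{X_1}-a_1b_1b_1'\end{pmatrix},\] one has $q_{X_n \odot Y_n} = q_{X_n}\, q_{Y_n}$.
   Context: $R$ is a commutative ring and $(A,q)$ a composition algebra over $R$ with involution $\alpha\mapsto\overline{\alpha}$, $q(\alpha)=\alpha\overline{\alpha}$, $q(\alpha\beta)=q(\alpha)q(\beta)$. On $A\oplus H(R^n)$ the quadratic form is $q(\alpha,v,w)=\alpha\overline{\alpha}+v\cdot w^\intercal$. For $v=(a_1,\dots,a_n)$, $w=(b_1,\dots,b_n)$, set $Z_1(\alpha,v,w)=\begin{pmatrix} a_1&\alpha\\-\overline{\alpha}&b_1\end{pmatrix}$, $\overline{Z_1}=\begin{pmatrix} b_1&-\alpha\\\overline{\alpha}&a_1\end{pmatrix}$, and recursively $Z_i=\begin{pmatrix} a_i&Z_{i-1}\\-\overline{Z_{i-1}}&b_i\end{pmatrix}$, $\overline{Z_i}=\begin{pmatrix} b_i&-Z_{i-1}\\\overline{Z_{i-1}}&a_i\end{pmatrix}$; then $q(Z_i)=Z_i\overline{Z_i}=\alpha\overline{\alpha}+a_1b_1+\dots+a_ib_i$.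 Fix $v=(a_1,\dots,a_n)\in R^n$, let $\alpha,\beta\in A$, $w=(b_1,\dots,b_n)$, $w'=(b_1',\dots,b_n')$, and write $q_Z$ for $q(Z)$. *)

theory Defs
  imports Main
begin

definition comp_alg ::
  "('r::comm_ring_1 \<Rightarrow> 'a::ab_group_add) \<Rightarrow> ('a \<Rightarrow> 'a \<Rightarrow> 'a) \<Rightarrow> ('a \<Rightarrow> 'a) \<Rightarrow> ('a \<Rightarrow> 'r) \<Rightarrow> bool"
  where "comp_alg iota mult cnj q \<longleftrightarrow>
     (\<forall>x. cnj (cnj x) = x) \<and>
     (\<forall>x y. cnj (x + y) = cnj x + cnj y) \<and>
     (\<forall>x y. cnj (mult x y) = mult (cnj y) (cnj x)) \<and>
     (\<forall>x y z. mult (x + y) z = mult x z + mult y z) \<and>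
     (\<forall>x y z. mult x (y + z) = mult x y + mult x z) \<and>
     (\<forall>x. mult x (cnj x) = iota (q x)) \<and>
     (\<forall>x y. q (mult x y) = q x * q y)"

text \<open>Formal block matrices: ZBase alpha is the entry alpha of A;
  ZStep a Z b is the matrix ((a, Z), (-conj Z, b)).\<close>
datatype ('a, 'r) zmat = ZBase 'a | ZStep 'r "('a, 'r) zmat" 'r

text \<open>The quadratic form q(Z) = Z * conj Z, i.e. q(alpha) + sum a_j b_j.\<close>
fun qZ :: "('a \<Rightarrow> 'r::comm_ring_1) \<Rightarrow> ('a, 'r) zmat \<Rightarrow> 'r" where
  "qZ q (ZBase \<alpha>) = q \<alpha>"
| "qZ q (ZStep a Z b) = qZ q Z + a * b"

text \<open>Z_i(alpha, v, w) with v = (a_1,...,a_n), w = (b_1,...,b_n) given as functions on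
  indices 1..n; index 0 gives the base entry alpha (so Z_1 = ZStep a_1 (ZBase alpha) b_1).\<close>
fun Zm :: "'a \<Rightarrow> (nat \<Rightarrow> 'r) \<Rightarrow> (nat \<Rightarrow> 'r) \<Rightarrow> nat \<Rightarrow> ('a, 'r) zmat" where
  "Zm \<alpha> v w 0 = ZBase \<alpha>"
| "Zm \<alpha> v w (Suc i) = ZStep (v (Suc i)) (Zm \<alpha> v w i) (w (Suc i))"

fun odotZ :: "('a \<Rightarrow> 'a \<Rightarrow> 'a) \<Rightarrow> ('a \<Rightarrow> 'r::comm_ring_1) \<Rightarrow> 'a \<Rightarrow> 'a \<Rightarrow>
    (nat \<Rightarrow> 'r) \<Rightarrow> (nat \<Rightarrow> 'r) \<Rightarrow> (nat \<Rightarrow> 'r) \<Rightarrow> nat \<Rightarrow> ('a, 'r) zmat" where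
  "odotZ mult q \<alpha> \<beta> v w w' 0 = ZBase (mult \<alpha> \<beta>)"
| "odotZ mult q \<alpha> \<beta> v w w' (Suc i) =
     ZStep (v (Suc i)) (odotZ mult q \<alpha> \<beta> v w w' i)
       (w (Suc i) * qZ q (Zm \<beta> v w' (Suc i)) + w' (Suc i) * qZ q (Zm \<alpha> v w (Suc i))
        - v (Suc i) * w (Suc i) * w' (Suc i))"

end

theory Submission
  imports Defs
begin

text \<open>Induction on \<open>i\<close>, using only multiplicativity of the norm: the bottom-right
  entry of \<open>X\<^sub>i \<odot> Y\<^sub>i\<close> is chosen exactly so that one step of the recursion turns
  \<open>q\<^sub>X\<^sub>i\<^sub>-\<^sub>1 q\<^sub>Y\<^sub>i\<^sub>-\<^sub>1\<close> into
  \<open>(q\<^sub>X\<^sub>i\<^sub>-\<^sub>1 + a\<^sub>i b\<^sub>i) (q\<^sub>Y\<^sub>i\<^sub>-\<^sub>1 + a\<^sub>i b'\<^sub>i) = q\<^sub>X\<^sub>i q\<^sub>Y\<^sub>i\<close>.\<close>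

lemma norm_product_step:
  fixes x y a b b' :: "'r::comm_ring_1"
  shows "x * y + a * (b * (y + a * b') + b' * (x + a * b) - a * b * b')
           = (x + a * b) * (y + a * b')"
  by (simp add: algebra_simps)

lemma comp_alg_norm_mult:
  assumes "comp_alg iota mult cnj q"
  shows "q (mult x y) = q x * q y"
  using assms by (simp add: comp_alg_def)

lemma qZ_odotZ:
  assumes norm_mult: "\<And>x y. q (mult x y) = q x * q y"
  shows "qZ q (odotZ mult q \<alpha> \<beta> v w w' n) = qZ q (Zm \<alpha> v w n) * qZ q (Zm \<beta> v w' n)"
proof (induction n)
  case 0
  show ?case by (simp add: norm_mult)
next
  case (Suc n)
  let ?X = "qZ q (Zm \<alpha> v w n)" and ?Y = "qZ q (Zm \<beta> v w' n)"
  let ?a = "v (Suc n)" and ?b = "w (Suc n)" and ?b' = "w' (Suc n)"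
  have "qZ q (odotZ mult q \<alpha> \<beta> v w w' (Suc n))
      = ?X * ?Y + ?a * (?b * (?Y + ?a * ?b') + ?b' * (?X + ?a * ?b) - ?a * ?b * ?b')"
    using Suc.IH by simp
  also have "\<dots> = (?X + ?a * ?b) * (?Y + ?a * ?b')"
    by (rule norm_product_step)
  finally show ?case by simp
qed

theorem mainTheorem10:
  fixes iota :: "'r::comm_ring_1 \<Rightarrow> 'a::ab_group_add"
    and mult :: "'a \<Rightarrow> 'a \<Rightarrow> 'a" and cnj :: "'a \<Rightarrow> 'a" and q :: "'a \<Rightarrow> 'r"
    and \<alpha> \<beta> :: 'a and v w w' :: "nat \<Rightarrow> 'r" and n :: nat
  assumes "comp_alg iota mult cnj q" and "n \<ge> 1"
  shows "qZ q (odotZ mult q \<alpha> \<beta> v w w' n) = qZ q (Zm \<alpha> v w n) * qZ q (Zm \<beta> v w' n)"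
  by (rule qZ_odotZ) (rule comp_alg_norm_mult[OF assms(1)])

end
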